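(* Let $L$ be a virtual link. Then $L$ is graphical if and only if $L$ is checkerboard colorable.
   Context: A virtual link diagram is a generic immersion of a closed 1-manifold in $\mathbb{R}^2$ whose double points are either real (classical) crossings, with over/under information, or virtual crossings (marked by a small circle); a virtual link is an equivalence class of virtual link diagrams under the generalized Reidemeister moves (classical Reidemeister moves I–III, their purely virtual analogues, and the mixed move in which a strand with only virtual crossings passes over/through a real crossing). A cyclic graph is a finite graph together with a cyclic ordering of the half-edges at each vertex (equivalently, a graph cellularly embedded in a closed orientable surface, or an orientable ribbon graph); a signed cyclic graph additionally has each edge labelled $+$ or $-$. Given a signed cyclic graph $G$, view it as cellularly embedded in a closed oriented surface and perform the medial construction: place a crossing at the midpoint of each edge $e$ and join the crossings around each face, obtaining a link diagram on the surface; the crossing at $e$ is chosen so that, if $e$ is positive, its $B$-smoothing is the one that separates the two sides along $e$ (following the boundaries of the endpoints of $e$) and its $A$-smoothing is the one that connects across $e$; for a negative edge the roles of $A$ and $B$ are exchanged (here $A$- and $B$-smoothings are Kauffman's standard ones). Immersing the surface diagram generically in the plane, with artefacts of the immersion marked as virtual crossings, gives a virtual link diagram; all such diagrams (for all immersions) are called the virtual link diagrams associated with $G$, and they all represent the same virtual link. A virtual link is graphical if it is represented by a virtual link diagram associated with some signed cyclic graph. A virtual link diagram is checkerboard colorable if one can color a small neighbourhood of one side of each arc so that near each real crossing the colored sides alternate around the crossing, and near each virtual crossing the colorings of the two strands pass through independently. A virtual link is checkerboard colorable if it has a checkerboard colorable diagram. *)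

theory Defs
  imports Main
begin

text \<open>
A virtual link diagram modulo planar isotopy and the purely virtual and mixed moves
is encoded by its abstract diagram: a finite set of real crossings (4-valent
vertices) and of beads (2-valent subdivision points of arcs; a crossingless circle
component is a bead whose two ends are joined), together with a fixed-point free
involution mate on the ends joining them into arcs.  The ends of a crossing v are
(v,0),(v,1),(v,2),(v,3), listed in counterclockwise order around the crossing
(orientation of the supporting surface), and the over-strand joins (v,0) and (v,2),
the under-strand joins (v,1) and (v,3).
\<close>

record 'v diagram =
  xings :: "'v set"
  beads :: "'v set"
  mate  :: "'v \<times> nat \<Rightarrow> 'v \<times> nat"

definition ends :: "'v diagram \<Rightarrow> ('v \<times> nat) set" where
  "ends D = {(v,i). (v \<in> xings D \<and> i < 4) \<or> (v \<in> beads D \<and> i < 2)}"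

definition wf_diagram :: "'v diagram \<Rightarrow> bool" where
  "wf_diagram D \<longleftrightarrow> finite (xings D) \<and> finite (beads D) \<and> xings D \<inter> beads D = {} \<and>
     (\<forall>e\<in>ends D. mate D e \<in> ends D \<and> mate D e \<noteq> e \<and> mate D (mate D e) = e)"

text \<open>Isomorphism of diagrams: relabelling of vertices, rotation of a crossing by a
half turn (which preserves the over-strand), and flipping of beads.\<close>

definition end_map :: "'v diagram \<Rightarrow> ('v \<Rightarrow> 'w) \<Rightarrow> ('v \<Rightarrow> nat) \<Rightarrow> 'v \<times> nat \<Rightarrow> 'w \<times> nat" where
  "end_map D f r e = (if fst e \<in> xings D then (f (fst e), (snd e + r (fst e)) mod 4)
                      else (f (fst e), (snd e + r (fst e)) mod 2))"

definition diag_iso :: "'v diagram \<Rightarrow> 'w diagram \<Rightarrow> bool" where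
  "diag_iso D1 D2 \<longleftrightarrow> (\<exists>f r. bij_betw f (xings D1) (xings D2) \<and> bij_betw f (beads D1) (beads D2) \<and>
      (\<forall>v\<in>xings D1. r v \<in> {0,2}) \<and> (\<forall>v\<in>beads D1. r v \<in> {0,1}) \<and>
      (\<forall>e\<in>ends D1. mate D2 (end_map D1 f r e) = end_map D1 f r (mate D1 e)))"

definition bead_add :: "'v diagram \<Rightarrow> 'v diagram \<Rightarrow> bool" where
  "bead_add D D' \<longleftrightarrow> (\<exists>b p. b \<notin> xings D \<union> beads D \<and> p \<in> ends D \<and>
      xings D' = xings D \<and> beads D' = insert b (beads D) \<and>
      mate D' p = (b,0) \<and> mate D' (b,0) = p \<and>
      mate D' (b,1) = mate D p \<and> mate D' (mate D p) = (b,1) \<and>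
      (\<forall>e\<in>ends D. e \<noteq> p \<and> e \<noteq> mate D p \<longrightarrow> mate D' e = mate D e))"

text \<open>Local replacement: the beads Bs (each marking a small piece of arc) are removed
and replaced by a tangle on the fresh crossings Xs; sg sends each bead end to the
tangle end that takes over its connection to the outside, and I gives the internal
connections of the tangle on the remaining tangle ends.\<close>

definition subst_rel :: "'v diagram \<Rightarrow> 'v set \<Rightarrow> 'v set \<Rightarrow> ('v \<times> nat \<Rightarrow> 'v \<times> nat)
     \<Rightarrow> ('v \<times> nat \<Rightarrow> 'v \<times> nat) \<Rightarrow> 'v diagram \<Rightarrow> bool" where
  "subst_rel D Bs Xs sg I D' \<longleftrightarrow>
     (let sub = (\<lambda>e. if fst e \<in> Bs then sg e else e) in
      Bs \<subseteq> beads D \<and> Xs \<inter> (xings D \<union> beads D) = {} \<and>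
      xings D' = xings D \<union> Xs \<and> beads D' = beads D - Bs \<and>
      (\<forall>e\<in>ends D. fst e \<notin> Bs \<longrightarrow> mate D' e = sub (mate D e)) \<and>
      (\<forall>e\<in>ends D. fst e \<in> Bs \<longrightarrow> mate D' (sg e) = sub (mate D e)) \<and>
      (\<forall>e\<in>(Xs \<times> {..<4}) - sg ` {e\<in>ends D. fst e \<in> Bs}. mate D' e = I e))"

text \<open>Reidemeister I: a kink (a loop joining two consecutive ends of a crossing).\<close>

definition reid1 :: "'v diagram \<Rightarrow> 'v diagram \<Rightarrow> bool" where
  "reid1 D D' \<longleftrightarrow> (\<exists>b c i. b \<in> beads D \<and> i < 4 \<and>
     subst_rel D {b} {c}
       (\<lambda>e. if e = (b,0) then (c, (i+2) mod 4) else if e = (b,1) then (c, (i+3) mod 4) else e)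
       (\<lambda>e. if e = (c,i) then (c, (i+1) mod 4) else if e = (c, (i+1) mod 4) then (c,i) else e)
       D')"

text \<open>Reidemeister II: strand A (bead b1) passes over strand B (bead b2) at crossings
c and d, creating a bigon.\<close>

definition reid2 :: "'v diagram \<Rightarrow> 'v diagram \<Rightarrow> bool" where
  "reid2 D D' \<longleftrightarrow> (\<exists>b1 b2 c d. b1 \<noteq> b2 \<and> c \<noteq> d \<and>
     subst_rel D {b1,b2} {c,d}
       (\<lambda>e. if e = (b1,0) then (c,0) else if e = (b1,1) then (d,2)
            else if e = (b2,0) then (c,3) else if e = (b2,1) then (d,3) else e)
       (\<lambda>e. if e = (c,2) then (d,0) else if e = (d,0) then (c,2)
            else if e = (c,1) then (d,1) else if e = (d,1) then (c,1) else e)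
       D')"

text \<open>Reidemeister III: top strand (bead bT), middle strand (bM), bottom strand (bB);
the two sides of the move are the two triangle tangles with the same six
external ends (in the same cyclic order).\<close>

definition reid3 :: "'v diagram \<Rightarrow> 'v diagram \<Rightarrow> bool" where
  "reid3 D1 D2 \<longleftrightarrow> (\<exists>D0 bT bM bB x y z x' y' z'.
     wf_diagram D0 \<and> distinct [bT,bM,bB] \<and> distinct [x,y,z] \<and> distinct [x',y',z'] \<and>
     subst_rel D0 {bT,bM,bB} {x,y,z}
       (\<lambda>e. if e = (bT,0) then (x,0) else if e = (bT,1) then (y,2)
            else if e = (bM,0) then (x,3) else if e = (bM,1) then (z,2)
            else if e = (bB,0) then (y,3) else if e = (bB,1) then (z,1) else e)
       (\<lambda>e. if e = (x,2) then (y,0) else if e = (y,0) then (x,2)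
            else if e = (x,1) then (z,0) else if e = (z,0) then (x,1)
            else if e = (y,1) then (z,3) else if e = (z,3) then (y,1) else e)
       D1 \<and>
     subst_rel D0 {bT,bM,bB} {x',y',z'}
       (\<lambda>e. if e = (bT,0) then (y',0) else if e = (bT,1) then (x',2)
            else if e = (bM,0) then (z',0) else if e = (bM,1) then (x',1)
            else if e = (bB,0) then (z',3) else if e = (bB,1) then (y',1) else e)
       (\<lambda>e. if e = (y',2) then (x',0) else if e = (x',0) then (y',2)
            else if e = (z',2) then (x',3) else if e = (x',3) then (z',2)
            else if e = (z',1) then (y',3) else if e = (y',3) then (z',1) else e)
       D2)"

definition vstep :: "'v diagram \<Rightarrow> 'v diagram \<Rightarrow> bool" where
  "vstep D D' \<longleftrightarrow> wf_diagram D \<and> wf_diagram D' \<and>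
     (diag_iso D D' \<or> bead_add D D' \<or> reid1 D D' \<or> reid2 D D' \<or> reid3 D D')"

definition vequiv :: "'v diagram \<Rightarrow> 'v diagram \<Rightarrow> bool" where
  "vequiv = equivclp vstep"

text \<open>The end e stands for the side of the arc at e that is traversed when running
along the arc towards e and turning counterclockwise at its vertex; its partner
mate e stands for the other side.  C is the set of coloured sides: exactly one side
of every arc, coloured sides alternating around each real crossing, and colours
passing straight through beads (virtual crossings).\<close>

definition cb_coloring :: "'v diagram \<Rightarrow> ('v \<times> nat) set \<Rightarrow> bool" where
  "cb_coloring D C \<longleftrightarrow> C \<subseteq> ends D \<and>
     (\<forall>e\<in>ends D. e \<in> C \<longleftrightarrow> mate D e \<notin> C) \<and>
     (\<forall>v\<in>xings D. (\<forall>i<4. (v,i) \<in> C \<longleftrightarrow> even i) \<or> (\<forall>i<4. (v,i) \<in> C \<longleftrightarrow> odd i)) \<and>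
     (\<forall>v\<in>beads D. (v,0) \<in> C \<longleftrightarrow> (v,1) \<notin> C)"

definition cb_colorable :: "'v diagram \<Rightarrow> bool" where
  "cb_colorable D \<longleftrightarrow> (\<exists>C. cb_coloring D C)"

text \<open>Half-edge model: hes = half-edges, eswap = the other half of the same edge,
rot = next half-edge in the cyclic order at its vertex (vertices = rot-orbits),
pos = sign of the edge.\<close>

record 'h scgraph =
  hes   :: "'h set"
  eswap :: "'h \<Rightarrow> 'h"
  rot   :: "'h \<Rightarrow> 'h"
  pos   :: "'h \<Rightarrow> bool"

definition wf_scgraph :: "'h scgraph \<Rightarrow> bool" where
  "wf_scgraph G \<longleftrightarrow> finite (hes G) \<and> bij_betw (rot G) (hes G) (hes G) \<and>
     (\<forall>h\<in>hes G. eswap G h \<in> hes G \<and> eswap G h \<noteq> h \<and> eswap G (eswap G h) = h \<and>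
                 pos G (eswap G h) = pos G h)"

text \<open>D is (isomorphic to) the medial diagram of G: the crossing of edge {h, eswap h}
has, in counterclockwise order, the ends k(h,True), k(h,False), k(eswap h,True),
k(eswap h,False), where (h,True) points to the corner between h and rot h and
(h,False) to the corner between the predecessor of h and h; corners are joined
along faces; for a positive edge the over-strand is the one through (h,True)
(so the A-smoothing connects across the edge), for a negative edge the one through
(h,False).\<close>

definition associated :: "'h scgraph \<Rightarrow> 'v diagram \<Rightarrow> bool" where
  "associated G D \<longleftrightarrow> wf_diagram D \<and> beads D = {} \<and>
     (\<exists>k. bij_betw k (hes G \<times> UNIV) (ends D) \<and>
        (\<forall>h\<in>hes G. \<exists>v j. v \<in> xings D \<and> j < 4 \<and>
            k (h,True) = (v,j) \<and> k (h,False) = (v,(j+1) mod 4) \<and>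
            k (eswap G h,True) = (v,(j+2) mod 4) \<and> k (eswap G h,False) = (v,(j+3) mod 4) \<and>
            (pos G h \<longleftrightarrow> even j)) \<and>
        (\<forall>h\<in>hes G. mate D (k (h,True)) = k (rot G h, False)))"

definition graphical :: "nat diagram \<Rightarrow> bool" where
  "graphical D \<longleftrightarrow> (\<exists>(G :: nat scgraph) D'. wf_scgraph G \<and> associated G D' \<and> vequiv D D')"

definition vcheckerboard :: "nat diagram \<Rightarrow> bool" where
  "vcheckerboard D \<longleftrightarrow> (\<exists>D'. vequiv D D' \<and> cb_colorable D')"

end

theory Submission
  imports Defs "HOL-Library.Nat_Bijection"
begin

(* In a bead-free diagram, checkerboard colourings and signed cyclic graphs with the diagram
   as medial diagram are two descriptions of the same thing: the coloured ends are the
   half-edges, the opposite coloured end at the same crossing is the other half of the edge,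
   and following an arc from a coloured end and turning back to the coloured side gives the
   rotation at a vertex.  It remains to get rid of beads (virtual crossings) without losing
   the colouring: a bead on an arc is simply deleted, and a bead that is a whole circle is
   replaced by a kink (Reidemeister I). *)

lemma vequiv_wf_diagram:
  assumes "vequiv D D'" "wf_diagram D"
  shows "wf_diagram D'"
  using assms(1) unfolding vequiv_def
  by (induction rule: equivclp_induct) (use assms(2) in \<open>auto simp: vstep_def\<close>)

lemma even_mod_4_iff: "even ((m::nat) mod 4) \<longleftrightarrow> even m"
  by (metis dvd_mod_iff even_numeral)

lemma less_4_cases: "(i::nat) < 4 \<Longrightarrow> i = 0 \<or> i = 1 \<or> i = 2 \<or> i = 3"
  by auto

lemma alternating_at_crossing:
  fixes j :: nat
  assumes j: "j < 4" and P: "P j" "\<not> P ((j+1) mod 4)" "P ((j+2) mod 4)" "\<not> P ((j+3) mod 4)"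
  shows "(\<forall>i<4. P i \<longleftrightarrow> even i) \<or> (\<forall>i<4. P i \<longleftrightarrow> odd i)"
proof -
  have turn: "P ((j+n) mod 4) \<longleftrightarrow> even n" if "n < 4" for n
    using less_4_cases[OF that] P j by (elim disjE) simp_all
  have "P i \<longleftrightarrow> (even i \<longleftrightarrow> even j)" if i: "i < 4" for i
  proof -
    define n where "n = (i + 4 - j) mod 4"
    have "(j + n) mod 4 = (j + (i + 4 - j)) mod 4"
      unfolding n_def by (simp add: mod_add_right_eq)
    also have "\<dots> = i"
      using i j by simp
    finally have "i = (j + n) mod 4" ..
    then show ?thesis
      using turn[of n] j by (simp add: n_def even_mod_4_iff)
  qed
  then show ?thesis
    by auto
qed

definition xing_turn :: "nat \<Rightarrow> 'v \<times> nat \<Rightarrow> 'v \<times> nat" where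
  "xing_turn n e = (fst e, (snd e + n) mod 4)"

lemma xing_turn_xing_turn [simp]: "xing_turn m (xing_turn n e) = xing_turn (n + m) e"
  by (simp add: xing_turn_def mod_add_left_eq add.assoc)

lemma xing_turn_4 [simp]: "snd e < 4 \<Longrightarrow> xing_turn 4 e = e"
  by (simp add: xing_turn_def)

lemma xing_turn_eq_iff:
  assumes "n \<le> 4" "snd e < 4" "snd e' < 4"
  shows "xing_turn n e = xing_turn n e' \<longleftrightarrow> e = e'"
proof -
  have "xing_turn (4 - n) (xing_turn n x) = x" if "snd x < 4" for x :: "'a \<times> nat"
    using assms(1) that by simp
  then show ?thesis
    using assms(2,3) by metis
qed

lemma cb_coloring_xing_turn:
  assumes C: "cb_coloring D C" and e: "e \<in> ends D" "fst e \<in> xings D"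
  shows "xing_turn n e \<in> C \<longleftrightarrow> (e \<in> C \<longleftrightarrow> even n)"
proof -
  obtain v i where vi: "e = (v, i)" "v \<in> xings D" "i < 4"
    using e by (cases e) (auto simp: ends_def)
  have "(\<forall>j<4. (v,j) \<in> C \<longleftrightarrow> even j) \<or> (\<forall>j<4. (v,j) \<in> C \<longleftrightarrow> odd j)"
    using C vi(2) by (auto simp: cb_coloring_def)
  then show ?thesis
    using vi by (auto simp: xing_turn_def even_mod_4_iff)
qed

definition fpf_involution_on :: "'a set \<Rightarrow> ('a \<Rightarrow> 'a) \<Rightarrow> bool" where
  "fpf_involution_on A m \<longleftrightarrow> (\<forall>e\<in>A. m e \<in> A \<and> m e \<noteq> e \<and> m (m e) = e)"

lemma fpf_involution_onD:
  assumes "fpf_involution_on A m" "e \<in> A"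
  shows "m e \<in> A" "m e \<noteq> e" "m (m e) = e"
  using assms by (auto simp: fpf_involution_on_def)

lemma splice_neighbours:
  assumes m: "fpf_involution_on A m" and xy: "x \<in> A" "y \<in> A" "x \<noteq> y" "m x \<noteq> y"
  shows "m x \<in> A - {x, y}" "m y \<in> A - {x, y}" "m x \<noteq> m y"
    and "\<And>e. e \<in> A - {x, y, m x, m y} \<Longrightarrow> m e \<in> A - {x, y, m x, m y}"
proof -
  note inv = fpf_involution_onD[OF m]
  show "m x \<in> A - {x, y}"
    using inv xy by simp
  show "m y \<in> A - {x, y}"
    using inv xy by (metis Diff_iff insert_iff singletonD)
  show "m x \<noteq> m y"
    using inv(3) xy by metis
  show "m e \<in> A - {x, y, m x, m y}" if "e \<in> A - {x, y, m x, m y}" for e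
  proof -
    have e: "e \<in> A" "e \<noteq> x" "e \<noteq> y" "e \<noteq> m x" "e \<noteq> m y"
      using that by auto
    then have "m e \<noteq> x" "m e \<noteq> y" "m e \<noteq> m x" "m e \<noteq> m y"
      using inv(3) xy by metis+
    then show ?thesis
      using inv(1) e(1) by simp
  qed
qed

lemma fpf_involution_on_splice:
  assumes m: "fpf_involution_on A m" and xy: "x \<in> A" "y \<in> A" "x \<noteq> y" "m x \<noteq> y"
  shows "fpf_involution_on (A - {x, y}) (m(m x := m y, m y := m x))"
  using splice_neighbours[OF assms] fpf_involution_onD[OF m]
  unfolding fpf_involution_on_def by auto

lemma alternating_splice:
  assumes m: "fpf_involution_on A m" and xy: "x \<in> A" "y \<in> A" "x \<noteq> y" "m x \<noteq> y"
    and C: "\<forall>e\<in>A. e \<in> C \<longleftrightarrow> m e \<notin> C" "x \<in> C \<longleftrightarrow> y \<notin> C"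
  shows "\<forall>e\<in>A - {x, y}. e \<in> C - {x, y} \<longleftrightarrow> (m(m x := m y, m y := m x)) e \<notin> C - {x, y}"
proof
  note splice = splice_neighbours[OF m xy]
  fix e assume e: "e \<in> A - {x, y}"
  then consider "e = m x \<or> e = m y" | "e \<in> A - {x, y, m x, m y}"
    by blast
  then show "e \<in> C - {x, y} \<longleftrightarrow> (m(m x := m y, m y := m x)) e \<notin> C - {x, y}"
  proof cases
    case 1
    then show ?thesis
      using splice(1-3) C(2) C(1)[rule_format, OF xy(1)] C(1)[rule_format, OF xy(2)] by auto
  next
    case 2
    then show ?thesis
      using splice(4)[of e] C(1) by auto
  qed
qed

lemma wf_diagram_iff_fpf_involution:
  "wf_diagram D \<longleftrightarrow> finite (xings D) \<and> finite (beads D) \<and> xings D \<inter> beads D = {} \<and>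
     fpf_involution_on (ends D) (mate D)"
  by (auto simp: wf_diagram_def fpf_involution_on_def)


context
  fixes G :: "'h scgraph" and D :: "'v diagram" and k :: "'h \<times> bool \<Rightarrow> 'v \<times> nat"
  assumes G: "wf_scgraph G" and wf: "wf_diagram D"
    and k: "bij_betw k (hes G \<times> UNIV) (ends D)"
    and kx: "\<forall>h\<in>hes G. \<exists>v j. v \<in> xings D \<and> j < 4 \<and>
            k (h,True) = (v,j) \<and> k (h,False) = (v,(j+1) mod 4) \<and>
            k (eswap G h,True) = (v,(j+2) mod 4) \<and> k (eswap G h,False) = (v,(j+3) mod 4)"
    and km: "\<forall>h\<in>hes G. mate D (k (h,True)) = k (rot G h, False)"
begin

lemma medial_ends: "ends D = k ` (hes G \<times> UNIV)"
  using k by (simp add: bij_betw_def)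

lemma medial_corner_iff: "h \<in> hes G \<Longrightarrow> k (h,\<beta>) \<in> k ` (hes G \<times> {True}) \<longleftrightarrow> \<beta>"
  using inj_on_image_mem_iff[of k "hes G \<times> UNIV" "(h,\<beta>)" "hes G \<times> {True}"] k
  by (auto simp: bij_betw_def)

lemma medial_corners_mate:
  assumes e: "e \<in> ends D"
  shows "e \<in> k ` (hes G \<times> {True}) \<longleftrightarrow> mate D e \<notin> k ` (hes G \<times> {True})"
proof -
  have rot: "bij_betw (rot G) (hes G) (hes G)"
    using G by (simp add: wf_scgraph_def)
  obtain h \<beta> where h: "h \<in> hes G" "e = k (h,\<beta>)"
    using e unfolding medial_ends by blast
  show ?thesis
  proof (cases \<beta>)
    case True
    have "rot G h \<in> hes G"
      using bij_betwE[OF rot] h(1) by blast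
    then show ?thesis
      using h km medial_corner_iff True by simp
  next
    case False
    have "h \<in> rot G ` hes G"
      using bij_betw_imp_surj_on[OF rot] h(1) by simp
    then obtain h0 where h0: "h0 \<in> hes G" "rot G h0 = h"
      by (metis imageE)
    have "k (h0,True) \<in> ends D"
      using h0(1) unfolding medial_ends by simp
    then have "mate D (mate D (k (h0,True))) = k (h0,True)"
      using wf by (simp add: wf_diagram_def)
    moreover have "mate D (k (h0,True)) = e"
      using km h0 h False by simp
    ultimately have "mate D e = k (h0,True)"
      by simp
    then show ?thesis
      using h h0 False medial_corner_iff by simp
  qed
qed

lemma medial_corners_xing:
  assumes v: "v \<in> xings D"
  shows "(\<forall>i<4. (v,i) \<in> k ` (hes G \<times> {True}) \<longleftrightarrow> even i) \<or>
    (\<forall>i<4. (v,i) \<in> k ` (hes G \<times> {True}) \<longleftrightarrow> odd i)"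
proof -
  have "(v,0) \<in> ends D"
    using v by (simp add: ends_def)
  then obtain h \<beta> where h: "h \<in> hes G" "(v,0) = k (h,\<beta>)"
    unfolding medial_ends by blast
  then obtain w j where j: "j < 4" "k (h,True) = (w,j)" "k (h,False) = (w,(j+1) mod 4)"
    "k (eswap G h,True) = (w,(j+2) mod 4)" "k (eswap G h,False) = (w,(j+3) mod 4)"
    using kx by blast
  have "w = v"
    using h(2) j(2,3) by (cases \<beta>) simp_all
  have "eswap G h \<in> hes G"
    using G h(1) by (simp add: wf_scgraph_def)
  then have "k (h,True) \<in> k ` (hes G \<times> {True})" "k (h,False) \<notin> k ` (hes G \<times> {True})"
    "k (eswap G h,True) \<in> k ` (hes G \<times> {True})" "k (eswap G h,False) \<notin> k ` (hes G \<times> {True})"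
    using medial_corner_iff h(1) by simp_all
  then show ?thesis
    unfolding j(2-5) \<open>w = v\<close>
    using alternating_at_crossing[of j "\<lambda>i. (v,i) \<in> k ` (hes G \<times> {True})"] j(1) by blast
qed

lemma cb_coloring_medial_corners:
  assumes "beads D = {}"
  shows "cb_coloring D (k ` (hes G \<times> {True}))"
  using assms medial_corners_mate medial_corners_xing
  unfolding cb_coloring_def medial_ends by blast

end

lemma associated_imp_cb_colorable:
  assumes G: "wf_scgraph G" and A: "associated G D"
  shows "cb_colorable D"
proof -
  obtain k where "bij_betw k (hes G \<times> UNIV) (ends D)"
    and "\<forall>h\<in>hes G. \<exists>v j. v \<in> xings D \<and> j < 4 \<and>
            k (h,True) = (v,j) \<and> k (h,False) = (v,(j+1) mod 4) \<and>
            k (eswap G h,True) = (v,(j+2) mod 4) \<and> k (eswap G h,False) = (v,(j+3) mod 4)"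
    and "\<forall>h\<in>hes G. mate D (k (h,True)) = k (rot G h, False)"
    using A unfolding associated_def by meson
  then show ?thesis
    using cb_coloring_medial_corners[OF G] A unfolding associated_def cb_colorable_def by blast
qed

definition bead_splice :: "'v diagram \<Rightarrow> 'v \<Rightarrow> 'v diagram" where
  "bead_splice D b = D\<lparr>beads := beads D - {b},
     mate := (mate D)(mate D (b,0) := mate D (b,1), mate D (b,1) := mate D (b,0))\<rparr>"

lemma bead_splice_simps [simp]:
  "xings (bead_splice D b) = xings D"
  "beads (bead_splice D b) = beads D - {b}"
  "mate (bead_splice D b) = (mate D)(mate D (b,0) := mate D (b,1), mate D (b,1) := mate D (b,0))"
  by (simp_all add: bead_splice_def)

lemma bead_ends:
  assumes "wf_diagram D" "b \<in> beads D"
  shows "b \<notin> xings D" "(b,0) \<in> ends D" "(b,1) \<in> ends D"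
  using assms by (auto simp: wf_diagram_def ends_def)

context
  fixes D :: "'v diagram" and b :: 'v
  assumes wf: "wf_diagram D" and b: "b \<in> beads D" and not_circle: "mate D (b,0) \<noteq> (b,1)"
begin

lemma ends_bead_splice: "ends (bead_splice D b) = ends D - {(b,0), (b,1)}"
  using bead_ends(1)[OF wf b] by (auto simp: ends_def)

lemma bead_splice_fpf:
  "fpf_involution_on (ends D) (mate D)" "(b,0) \<in> ends D" "(b,1) \<in> ends D" "(b,0) \<noteq> (b,1::nat)"
  using wf bead_ends[OF wf b] by (auto simp: wf_diagram_iff_fpf_involution)

lemma wf_bead_splice: "wf_diagram (bead_splice D b)"
  using wf fpf_involution_on_splice[OF bead_splice_fpf not_circle]
  by (auto simp: wf_diagram_iff_fpf_involution ends_bead_splice)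

lemma bead_add_bead_splice: "bead_add (bead_splice D b) D"
proof -
  note neighbours = splice_neighbours[OF bead_splice_fpf not_circle]
  have "mate D (mate D (b,0)) = (b,0)" "mate D (mate D (b,1)) = (b,1)"
    using fpf_involution_onD(3)[OF bead_splice_fpf(1)] bead_splice_fpf(2,3) by simp_all
  then show ?thesis
    unfolding bead_add_def
    using neighbours(1-3) bead_ends[OF wf b] b
    by (intro exI[of _ b] exI[of _ "mate D (b,0)"]) (auto simp: ends_bead_splice)
qed

lemma cb_coloring_bead_splice:
  assumes C: "cb_coloring D C"
  shows "cb_coloring (bead_splice D b) (C - {(b,0), (b,1)})"
  unfolding cb_coloring_def ends_bead_splice
proof (intro conjI)
  have "\<forall>e\<in>ends D. e \<in> C \<longleftrightarrow> mate D e \<notin> C" "(b,0) \<in> C \<longleftrightarrow> (b,1) \<notin> C"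
    using C b by (auto simp: cb_coloring_def)
  then show "\<forall>e\<in>ends D - {(b,0), (b,1)}. e \<in> C - {(b,0), (b,1)} \<longleftrightarrow>
      mate (bead_splice D b) e \<notin> C - {(b,0), (b,1)}"
    unfolding bead_splice_simps by (rule alternating_splice[OF bead_splice_fpf not_circle])
next
  have "v \<noteq> b" if "v \<in> xings D" for v
    using that bead_ends[OF wf b] by blast
  then show "\<forall>v\<in>xings (bead_splice D b). (\<forall>i<4. (v,i) \<in> C - {(b,0), (b,1)} \<longleftrightarrow> even i) \<or>
      (\<forall>i<4. (v,i) \<in> C - {(b,0), (b,1)} \<longleftrightarrow> odd i)"
    using C by (simp add: cb_coloring_def)
qed (use C in \<open>auto simp: cb_coloring_def\<close>)

end

(* The circle through the bead b becomes a kink at the fresh crossing c, whose ends 0, 1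
   and 2, 3 are joined in pairs (Reidemeister I with i = 0). *)

definition bead_kink :: "'v diagram \<Rightarrow> 'v \<Rightarrow> 'v \<Rightarrow> 'v diagram" where
  "bead_kink D b c = D\<lparr>xings := insert c (xings D), beads := beads D - {b},
     mate := \<lambda>e. if fst e = c then (c, if even (snd e) then snd e + 1 else snd e - 1) else mate D e\<rparr>"

lemma bead_kink_simps [simp]:
  "xings (bead_kink D b c) = insert c (xings D)"
  "beads (bead_kink D b c) = beads D - {b}"
  "mate (bead_kink D b c) e =
     (if fst e = c then (c, if even (snd e) then snd e + 1 else snd e - 1) else mate D e)"
  by (simp_all add: bead_kink_def)

context
  fixes D :: "'v diagram" and b c :: 'v
  assumes wf: "wf_diagram D" and b: "b \<in> beads D" and circle: "mate D (b,0) = (b,1)"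
    and fresh: "c \<notin> xings D \<union> beads D"
begin

lemma bead_kink_circle: "mate D (b,1) = (b,0)"
  using wf bead_ends(2)[OF wf b] circle by (metis wf_diagram_def)

lemma ends_bead_kink:
  "ends (bead_kink D b c) = (ends D - {(b,0), (b,1)}) \<union> {c} \<times> {..<4}"
  using fresh bead_ends(1)[OF wf b] b by (auto simp: ends_def)

lemma bead_kink_old_ends:
  assumes e: "e \<in> ends D - {(b,0), (b,1)}"
  shows "fst e \<noteq> c" "mate D e \<in> ends D - {(b,0), (b,1)}"
proof -
  have fpf: "fpf_involution_on (ends D) (mate D)"
    using wf by (simp add: wf_diagram_iff_fpf_involution)
  have "mate D e \<noteq> (b,0)" "mate D e \<noteq> (b,1)"
    using e circle bead_kink_circle fpf_involution_onD(3)[OF fpf] by (metis DiffD1 DiffD2 insertCI)+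
  then show "mate D e \<in> ends D - {(b,0), (b,1)}"
    using e fpf_involution_onD(1)[OF fpf] by simp
  show "fst e \<noteq> c"
    using e fresh by (auto simp: ends_def)
qed

lemma wf_bead_kink: "wf_diagram (bead_kink D b c)"
proof -
  have "fpf_involution_on (ends (bead_kink D b c)) (mate (bead_kink D b c))"
    unfolding fpf_involution_on_def
  proof
    fix e assume "e \<in> ends (bead_kink D b c)"
    then consider (old) "e \<in> ends D - {(b,0), (b,1)}" | (new) i where "e = (c,i)" "i < 4"
      unfolding ends_bead_kink by auto
    then show "mate (bead_kink D b c) e \<in> ends (bead_kink D b c) \<and> mate (bead_kink D b c) e \<noteq> e \<and>
        mate (bead_kink D b c) (mate (bead_kink D b c) e) = e"
    proof cases
      case old
      have "e \<in> ends D"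
        using old by blast
      then have "mate D e \<noteq> e" "mate D (mate D e) = e"
        using wf by (auto simp: wf_diagram_def)
      then show ?thesis
        using bead_kink_old_ends[OF old] bead_kink_old_ends(1)[OF bead_kink_old_ends(2)[OF old]]
        by (simp add: ends_bead_kink)
    next
      case new
      then show ?thesis
        using less_4_cases[OF new(2)] by (auto simp: ends_bead_kink)
    qed
  qed
  then show ?thesis
    using wf fresh by (auto simp: wf_diagram_iff_fpf_involution)
qed

lemma reid1_bead_kink: "reid1 D (bead_kink D b c)"
proof -
  have b_ends: "{e \<in> ends D. fst e \<in> {b}} = {(b,0), (b,1)}"
    using b bead_ends(1)[OF wf b] by (auto simp: ends_def)
  have old: "mate (bead_kink D b c) e = mate D e" "fst (mate D e) \<notin> {b}"
    if "e \<in> ends D" "fst e \<notin> {b}" for e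
  proof -
    have e: "e \<in> ends D - {(b,0), (b,1)}"
      using that by auto
    then show "mate (bead_kink D b c) e = mate D e" "fst (mate D e) \<notin> {b}"
      using bead_kink_old_ends[OF e] b_ends by auto
  qed
  have kink: "subst_rel D {b} {c}
     (\<lambda>e. if e = (b,0) then (c, (0+2) mod 4) else if e = (b,1) then (c, (0+3) mod 4) else e)
     (\<lambda>e. if e = (c,0) then (c, (0+1) mod 4) else if e = (c, (0+1) mod 4) then (c,0) else e)
     (bead_kink D b c)"
    unfolding subst_rel_def Let_def b_ends using b fresh old circle bead_kink_circle b_ends
    by (auto dest: less_4_cases)
  show ?thesis
    unfolding reid1_def
  proof (rule exI[of _ b], rule exI[of _ c], rule exI[of _ 0])
  qed (use b kink in simp)
qed

lemma bead_kink_mate_alternates: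
  assumes C: "cb_coloring D C" and e: "e \<in> ends (bead_kink D b c)"
  shows "e \<in> (C - {(b,0), (b,1)}) \<union> {(c,0), (c,2)} \<longleftrightarrow>
    mate (bead_kink D b c) e \<notin> (C - {(b,0), (b,1)}) \<union> {(c,0), (c,2)}"
proof -
  have c_uncoloured: "(c,i) \<notin> C" for i
    using C fresh by (auto simp: cb_coloring_def ends_def)
  consider (old) "e \<in> ends D - {(b,0), (b,1)}" | (new) i where "e = (c,i)" "i < 4"
    using e unfolding ends_bead_kink by auto
  then show ?thesis
  proof cases
    case old
    have "e \<in> C \<longleftrightarrow> mate D e \<notin> C"
      using C old by (simp add: cb_coloring_def)
    then show ?thesis
      using bead_kink_old_ends[OF old] bead_kink_old_ends(1)[OF bead_kink_old_ends(2)[OF old]] old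
      by auto
  next
    case new
    then show ?thesis
      using c_uncoloured less_4_cases[OF new(2)] by auto
  qed
qed

lemma cb_coloring_bead_kink:
  assumes C: "cb_coloring D C"
  shows "cb_coloring (bead_kink D b c) ((C - {(b,0), (b,1)}) \<union> {(c,0), (c,2)})"
proof -
  have C_ends: "C \<subseteq> ends D"
    using C by (simp add: cb_coloring_def)
  have c_uncoloured: "(c,i) \<notin> C" for i
    using C_ends fresh by (auto simp: ends_def)
  have old_vertex: "(v,i) \<in> (C - {(b,0), (b,1)}) \<union> {(c,0), (c,2)} \<longleftrightarrow> (v,i) \<in> C"
    if "v \<noteq> b" "v \<noteq> c" for v i
    using that by auto
  show ?thesis
    unfolding cb_coloring_def
  proof (intro conjI ballI)
    show "C - {(b,0), (b,1)} \<union> {(c,0), (c,2)} \<subseteq> ends (bead_kink D b c)"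
      using C_ends unfolding ends_bead_kink by auto
  next
    fix e assume "e \<in> ends (bead_kink D b c)"
    then show "e \<in> C - {(b,0), (b,1)} \<union> {(c,0), (c,2)} \<longleftrightarrow>
        mate (bead_kink D b c) e \<notin> C - {(b,0), (b,1)} \<union> {(c,0), (c,2)}"
      by (rule bead_kink_mate_alternates[OF C])
  next
    fix v assume "v \<in> xings (bead_kink D b c)"
    then consider "v = c" | "v \<in> xings D" "v \<noteq> b" "v \<noteq> c"
      using fresh bead_ends(1)[OF wf b] by auto
    then show "(\<forall>i<4. (v,i) \<in> C - {(b,0), (b,1)} \<union> {(c,0), (c,2)} \<longleftrightarrow> even i) \<or>
        (\<forall>i<4. (v,i) \<in> C - {(b,0), (b,1)} \<union> {(c,0), (c,2)} \<longleftrightarrow> odd i)"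
    proof cases
      case 1
      then show ?thesis
        using c_uncoloured by (auto dest: less_4_cases)
    qed (use C old_vertex in \<open>simp add: cb_coloring_def\<close>)
  next
    fix v assume "v \<in> beads (bead_kink D b c)"
    then show "(v,0) \<in> C - {(b,0), (b,1)} \<union> {(c,0), (c,2)} \<longleftrightarrow>
        (v,1) \<notin> C - {(b,0), (b,1)} \<union> {(c,0), (c,2)}"
      using C fresh old_vertex by (auto simp: cb_coloring_def)
  qed
qed

end

lemma remove_bead:
  fixes D :: "'v diagram"
  assumes wf: "wf_diagram D" and C: "cb_coloring D C" and b: "b \<in> beads D"
    and fresh_vertex: "infinite (UNIV :: 'v set)"
  shows "\<exists>D' C'. vequiv D D' \<and> wf_diagram D' \<and> cb_coloring D' C' \<and> beads D' = beads D - {b}"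
proof (cases "mate D (b,0) = (b,1)")
  case True
  have "finite (xings D \<union> beads D)"
    using wf by (simp add: wf_diagram_def)
  then obtain c where c: "c \<notin> xings D \<union> beads D"
    using ex_new_if_finite[OF fresh_vertex] by blast
  have "vstep D (bead_kink D b c)"
    using wf wf_bead_kink[OF wf b True c] reid1_bead_kink[OF wf b True c] by (simp add: vstep_def)
  then show ?thesis
    using wf_bead_kink[OF wf b True c] cb_coloring_bead_kink[OF wf b True c C]
    unfolding vequiv_def by (intro exI[of _ "bead_kink D b c"]) auto
next
  case False
  have "vstep (bead_splice D b) D"
    using wf wf_bead_splice[OF wf b False] bead_add_bead_splice[OF wf b False] by (simp add: vstep_def)
  then show ?thesis
    using wf_bead_splice[OF wf b False] cb_coloring_bead_splice[OF wf b False C]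
    unfolding vequiv_def by (intro exI[of _ "bead_splice D b"]) auto
qed

lemma remove_all_beads:
  fixes D :: "'v diagram"
  assumes "wf_diagram D" "cb_coloring D C" "infinite (UNIV :: 'v set)"
  shows "\<exists>D' C'. vequiv D D' \<and> wf_diagram D' \<and> cb_coloring D' C' \<and> beads D' = {}"
  using assms(1,2)
proof (induction "card (beads D)" arbitrary: D C rule: less_induct)
  case less
  show ?case
  proof (cases "beads D = {}")
    case True
    then show ?thesis
      using less.prems unfolding vequiv_def by (blast intro: equivclp_refl)
  next
    case False
    then obtain b where b: "b \<in> beads D"
      by blast
    obtain D1 C1 where D1: "vequiv D D1" "wf_diagram D1" "cb_coloring D1 C1" "beads D1 = beads D - {b}"
      using remove_bead[OF less.prems b assms(3)] by blast
    have "finite (beads D)"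
      using less.prems(1) by (simp add: wf_diagram_def)
    then have "card (beads D1) < card (beads D)"
      unfolding D1(4) using b by (rule card_Diff1_less)
    then obtain D2 C2 where D2: "vequiv D1 D2" "wf_diagram D2" "cb_coloring D2 C2" "beads D2 = {}"
      using less.hyps D1(2,3) by blast
    have "vequiv D D2"
      using D1(1) D2(1) unfolding vequiv_def by (rule equivclp_trans)
    then show ?thesis
      using D2 by blast
  qed
qed

lemma finite_ends: "wf_diagram D \<Longrightarrow> finite (ends D)"
proof -
  assume "wf_diagram D"
  then have "finite ((xings D \<union> beads D) \<times> {..<4::nat})"
    by (simp add: wf_diagram_def)
  moreover have "ends D \<subseteq> (xings D \<union> beads D) \<times> {..<4}"
    by (auto simp: ends_def)
  ultimately show ?thesis
    by (rule finite_subset[rotated])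
qed

lemma ends_beadfree: "beads D = {} \<Longrightarrow> e \<in> ends D \<longleftrightarrow> fst e \<in> xings D \<and> snd e < 4"
  by (cases e) (auto simp: ends_def)

definition checkerboard_graph :: "'v diagram \<Rightarrow> ('v \<times> nat) set \<Rightarrow> ('v \<times> nat) scgraph" where
  "checkerboard_graph D C =
     \<lparr>hes = C, eswap = xing_turn 2, rot = xing_turn 3 \<circ> mate D, pos = even \<circ> snd\<rparr>"

definition checkerboard_labelling :: "('v \<times> nat) \<times> bool \<Rightarrow> 'v \<times> nat" where
  "checkerboard_labelling = (\<lambda>(e, \<beta>). if \<beta> then e else xing_turn 1 e)"

context
  fixes D :: "'v diagram" and C :: "('v \<times> nat) set"
  assumes wf: "wf_diagram D" and no_beads: "beads D = {}" and C: "cb_coloring D C"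
begin

lemma checkerboard_ends:
  assumes "e \<in> ends D"
  shows "snd e < 4" "xing_turn n e \<in> ends D" "xing_turn n e \<in> C \<longleftrightarrow> (e \<in> C \<longleftrightarrow> even n)"
  using assms cb_coloring_xing_turn[OF C] by (auto simp: ends_beadfree[OF no_beads] xing_turn_def)

lemma checkerboard_mate:
  assumes "e \<in> ends D"
  shows "mate D e \<in> ends D" "mate D (mate D e) = e" "mate D e \<in> C \<longleftrightarrow> e \<notin> C"
proof -
  have "\<forall>e\<in>ends D. mate D e \<in> ends D \<and> mate D (mate D e) = e"
    using wf by (simp add: wf_diagram_def)
  moreover have "\<forall>e\<in>ends D. e \<in> C \<longleftrightarrow> mate D e \<notin> C"
    using C by (simp add: cb_coloring_def)
  ultimately show "mate D e \<in> ends D" "mate D (mate D e) = e" "mate D e \<in> C \<longleftrightarrow> e \<notin> C"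
    using assms by metis+
qed

lemma bij_betw_checkerboard_rot: "bij_betw (xing_turn 3 \<circ> mate D) C C"
proof -
  have C_ends: "C \<subseteq> ends D"
    using C by (simp add: cb_coloring_def)
  have "xing_turn 3 (mate D e) \<in> C" if "e \<in> C" for e
    using that C_ends checkerboard_ends(3)[of "mate D e" 3] checkerboard_mate[of e] by auto
  then have rot_C: "(xing_turn 3 \<circ> mate D) ` C \<subseteq> C"
    by auto
  have "inj_on (xing_turn 3 \<circ> mate D) C"
  proof (rule inj_onI)
    fix e e' assume "e \<in> C" "e' \<in> C" and eq: "(xing_turn 3 \<circ> mate D) e = (xing_turn 3 \<circ> mate D) e'"
    then have e: "e \<in> ends D" "e' \<in> ends D"
      using C_ends by auto
    then have "mate D e = mate D e'"
      using eq xing_turn_eq_iff[of 3 "mate D e" "mate D e'"] checkerboard_ends(1) checkerboard_mate(1) e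
      by simp
    then show "e = e'"
      using checkerboard_mate(2) e by metis
  qed
  then show ?thesis
    using endo_inj_surj[OF finite_subset[OF C_ends finite_ends[OF wf]] rot_C] by (simp add: bij_betw_def)
qed

lemma checkerboard_opposite:
  assumes "e \<in> C"
  shows "xing_turn 2 e \<in> C" "xing_turn 2 e \<noteq> e" "xing_turn 2 (xing_turn 2 e) = e"
    "even (snd (xing_turn 2 e)) = even (snd e)"
proof -
  have e: "e \<in> ends D"
    using assms C by (auto simp: cb_coloring_def)
  then have i: "snd e < 4"
    by (rule checkerboard_ends(1))
  show "xing_turn 2 e \<in> C"
    using assms checkerboard_ends(3)[OF e, of 2] by simp
  show "xing_turn 2 e \<noteq> e"
    using less_4_cases[OF i] by (auto simp: xing_turn_def prod_eq_iff)
  show "xing_turn 2 (xing_turn 2 e) = e"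
    using i by simp
  show "even (snd (xing_turn 2 e)) = even (snd e)"
    by (simp add: xing_turn_def even_mod_4_iff)
qed

lemma wf_checkerboard_graph: "wf_scgraph (checkerboard_graph D C)"
proof -
  have "finite C"
    using C finite_ends[OF wf] by (auto simp: cb_coloring_def intro: finite_subset)
  then show ?thesis
    using bij_betw_checkerboard_rot checkerboard_opposite
    by (simp add: wf_scgraph_def checkerboard_graph_def)
qed

lemma inj_on_checkerboard_labelling: "inj_on checkerboard_labelling (C \<times> UNIV)"
proof (rule inj_onI, clarify)
  fix e \<beta> e' \<beta>'
  assume e: "e \<in> C" "e' \<in> C" and eq: "checkerboard_labelling (e, \<beta>) = checkerboard_labelling (e', \<beta>')"
  have ends: "e \<in> ends D" "e' \<in> ends D"
    using e C by (auto simp: cb_coloring_def)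
  have "checkerboard_labelling (e, \<beta>) \<in> C \<longleftrightarrow> \<beta>" "checkerboard_labelling (e', \<beta>') \<in> C \<longleftrightarrow> \<beta>'"
    using e checkerboard_ends(3)[OF ends(1), of 1] checkerboard_ends(3)[OF ends(2), of 1]
    by (auto simp: checkerboard_labelling_def)
  then have "\<beta> = \<beta>'"
    using eq by simp
  moreover have "e = e'"
    using eq xing_turn_eq_iff[of 1 e e'] checkerboard_ends(1) ends calculation
    by (cases \<beta>) (simp_all add: checkerboard_labelling_def)
  ultimately show "e = e' \<and> \<beta> = \<beta>'"
    by simp
qed

lemma checkerboard_labelling_image: "checkerboard_labelling ` (C \<times> UNIV) = ends D"
proof
  have "C \<subseteq> ends D"
    using C by (simp add: cb_coloring_def)
  then show "checkerboard_labelling ` (C \<times> UNIV) \<subseteq> ends D"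
    using checkerboard_ends(2) by (auto simp: checkerboard_labelling_def)
next
  show "ends D \<subseteq> checkerboard_labelling ` (C \<times> UNIV)"
  proof
    fix e assume e: "e \<in> ends D"
    show "e \<in> checkerboard_labelling ` (C \<times> UNIV)"
    proof (cases "e \<in> C")
      case True
      then show ?thesis
        by (force simp: checkerboard_labelling_def)
    next
      case False
      then have "xing_turn 3 e \<in> C" "checkerboard_labelling (xing_turn 3 e, False) = e"
        using e checkerboard_ends[OF e] by (simp_all add: checkerboard_labelling_def)
      then show ?thesis
        by (metis UNIV_I mem_Sigma_iff rev_image_eqI)
    qed
  qed
qed

lemma associated_checkerboard_graph: "associated (checkerboard_graph D C) D"
proof -
  have C_ends: "C \<subseteq> ends D"
    using C by (simp add: cb_coloring_def)
  have "\<exists>v j. v \<in> xings D \<and> j < 4 \<and>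
      checkerboard_labelling (h,True) = (v,j) \<and> checkerboard_labelling (h,False) = (v,(j+1) mod 4) \<and>
      checkerboard_labelling (xing_turn 2 h,True) = (v,(j+2) mod 4) \<and>
      checkerboard_labelling (xing_turn 2 h,False) = (v,(j+3) mod 4) \<and>
      (even (snd h) \<longleftrightarrow> even j)" if "h \<in> C" for h
  proof -
    have "h \<in> ends D"
      using that C_ends by blast
    then have "fst h \<in> xings D" "snd h < 4"
      by (simp_all add: ends_beadfree[OF no_beads])
    then show ?thesis
      unfolding checkerboard_labelling_def
      by (intro exI[of _ "fst h"] exI[of _ "snd h"]) (simp, simp add: xing_turn_def)
  qed
  moreover have "mate D (checkerboard_labelling (h,True)) =
      checkerboard_labelling (xing_turn 3 (mate D h), False)" if "h \<in> C" for h
  proof -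
    have "h \<in> ends D"
      using that C_ends by blast
    then have "snd (mate D h) < 4"
      by (rule checkerboard_ends(1)[OF checkerboard_mate(1)])
    then show ?thesis
      by (simp add: checkerboard_labelling_def)
  qed
  ultimately show ?thesis
    unfolding associated_def
    using wf no_beads inj_on_checkerboard_labelling checkerboard_labelling_image
    by (intro conjI exI[of _ checkerboard_labelling]) (simp_all add: bij_betw_def checkerboard_graph_def)
qed

end

definition map_scgraph :: "('h \<Rightarrow> 'k) \<Rightarrow> 'h scgraph \<Rightarrow> 'k scgraph" where
  "map_scgraph f G =
     \<lparr>hes = f ` hes G, eswap = f \<circ> eswap G \<circ> inv_into (hes G) f,
      rot = f \<circ> rot G \<circ> inv_into (hes G) f, pos = pos G \<circ> inv_into (hes G) f\<rparr>"

context
  fixes f :: "'h \<Rightarrow> 'k" and G :: "'h scgraph"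
  assumes inj: "inj_on f (hes G)" and G: "wf_scgraph G"
begin

lemma bij_betw_inv_into_map_scgraph: "bij_betw (inv_into (hes G) f) (f ` hes G) (hes G)"
  using inj by (simp add: bij_betw_inv_into inj_on_imp_bij_betw)

lemma wf_map_scgraph: "wf_scgraph (map_scgraph f G)"
proof -
  have "bij_betw (f \<circ> rot G \<circ> inv_into (hes G) f) (f ` hes G) (f ` hes G)"
    using G inj bij_betw_inv_into_map_scgraph
    by (metis bij_betw_trans inj_on_imp_bij_betw wf_scgraph_def)
  then show ?thesis
    using G inj by (auto simp: wf_scgraph_def map_scgraph_def inj_on_eq_iff)
qed

lemma associated_map_scgraph:
  assumes "associated G D"
  shows "associated (map_scgraph f G) D"
proof -
  obtain k where k: "bij_betw k (hes G \<times> UNIV) (ends D)"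
    and kx: "\<forall>h\<in>hes G. \<exists>v j. v \<in> xings D \<and> j < 4 \<and>
            k (h,True) = (v,j) \<and> k (h,False) = (v,(j+1) mod 4) \<and>
            k (eswap G h,True) = (v,(j+2) mod 4) \<and> k (eswap G h,False) = (v,(j+3) mod 4) \<and>
            (pos G h \<longleftrightarrow> even j)"
    and km: "\<forall>h\<in>hes G. mate D (k (h,True)) = k (rot G h, False)"
    using assms unfolding associated_def by blast
  let ?k = "k \<circ> map_prod (inv_into (hes G) f) id"
  have "bij_betw ?k (f ` hes G \<times> UNIV) (ends D)"
    using bij_betw_map_prod[OF bij_betw_inv_into_map_scgraph bij_betw_id] k by (rule bij_betw_trans)
  moreover have "\<forall>h\<in>f ` hes G. \<exists>v j. v \<in> xings D \<and> j < 4 \<and>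
            ?k (h,True) = (v,j) \<and> ?k (h,False) = (v,(j+1) mod 4) \<and>
            ?k (eswap (map_scgraph f G) h,True) = (v,(j+2) mod 4) \<and>
            ?k (eswap (map_scgraph f G) h,False) = (v,(j+3) mod 4) \<and>
            (pos (map_scgraph f G) h \<longleftrightarrow> even j)"
    using kx G by (auto simp: map_scgraph_def inv_into_f_f[OF inj] wf_scgraph_def)
  moreover have "\<forall>h\<in>f ` hes G. mate D (?k (h,True)) = ?k (rot (map_scgraph f G) h, False)"
    using km G by (auto simp: map_scgraph_def inv_into_f_f[OF inj] wf_scgraph_def bij_betwE)
  ultimately show ?thesis
    using assms unfolding associated_def by (intro conjI exI[of _ ?k]) (simp_all add: map_scgraph_def)
qed

end

(* Graphical diagrams must come from graphs whose half-edges are natural numbers, hence the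
   relabelling by prod_encode. *)

lemma cb_coloring_imp_associated:
  fixes D :: "nat diagram"
  assumes "wf_diagram D" "beads D = {}" "cb_coloring D C"
  shows "\<exists>G :: nat scgraph. wf_scgraph G \<and> associated G D"
proof -
  have "inj_on prod_encode (hes (checkerboard_graph D C))"
    by (rule inj_on_subset[OF inj_prod_encode subset_UNIV])
  then show ?thesis
    using wf_map_scgraph associated_map_scgraph
      wf_checkerboard_graph[OF assms] associated_checkerboard_graph[OF assms]
    by blast
qed

theorem theorem3p3:
  fixes D :: "nat diagram"
  assumes "wf_diagram D"
  shows "graphical D \<longleftrightarrow> vcheckerboard D"
proof
  assume "graphical D"
  then obtain G :: "nat scgraph" and D' where "wf_scgraph G" "associated G D'" "vequiv D D'"
    unfolding graphical_def by blast
  then show "vcheckerboard D"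
    unfolding vcheckerboard_def using associated_imp_cb_colorable by blast
next
  assume "vcheckerboard D"
  then obtain D1 C1 where D1: "vequiv D D1" "cb_coloring D1 C1"
    unfolding vcheckerboard_def cb_colorable_def by blast
  obtain D2 C2 where D2: "vequiv D1 D2" "wf_diagram D2" "cb_coloring D2 C2" "beads D2 = {}"
    using remove_all_beads[OF vequiv_wf_diagram[OF D1(1) assms] D1(2) infinite_UNIV_nat] by blast
  obtain G :: "nat scgraph" where "wf_scgraph G" "associated G D2"
    using cb_coloring_imp_associated[OF D2(2,4,3)] by blast
  moreover have "vequiv D D2"
    using D1(1) D2(1) unfolding vequiv_def by (rule equivclp_trans)
  ultimately show "graphical D"
    unfolding graphical_def by blast
qed

end
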